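(* Let $\{x_k\}$ be generated by the Subgradient-InexP method with the exogenous stepsize rule, under the standing assumptions, and let $\rho:=\nu+2\mu$ where $\nu=\frac{1+2\bar\gamma}{1-2\bar\lambda}$. Then for every $x\in C$ and every $k=0,1,\dots$, $$\|x_{k+1}-x\|^2\le\|x_k-x\|^2+\rho\alpha_k^2-2\frac{\alpha_k}{\eta_k}\big[f(x_k)-f(x)\big].$$
   Context: Problem: minimize a convex $f:\mathbb{R}^n\to\mathbb{R}$ over a nonempty closed convex $C\subset\mathbb{R}^n$. For $\epsilon\ge0$, $\partial_\epsilon f(x):=\{s: f(y)\ge f(x)+\langle s,y-x\rangle-\epsilon\ \forall y\}$. Relative error tolerance function: any $\varphi_{\gamma,\theta,\lambda}:(\mathbb{R}^n)^3\to[0,\infty)$ with $\varphi_{\gamma,\theta,\lambda}(u,v,w)\le\gamma\|v-u\|^2+\theta\|w-v\|^2+\lambda\|w-u\|^2$; for $u\in C$, $\mathcal{P}_C(\varphi_{\gamma,\theta,\lambda},u,v):=\{w\in C:\langle v-w,z-w\rangle\le\varphi_{\gamma,\theta,\lambda}(u,v,w)\ \forall z\in C\}$. Subgradient-InexP method: $x_0\in C$; at iteration $k$, if $0\in\partial f(x_k)$ stop; otherwise choose nonzero $s_k\in\partial_{\epsilon_k}f(x_k)$, stepsize $t_k>0$, and $x_{k+1}\in\mathcal{P}_C(\varphi_{\gamma_k,\theta_k,\lambda_k},x_k,x_k-t_ks_k)$. Standing assumptions: $\gamma_k\in[0,\bar\gamma)$, $\theta_k\in[0,\bar\theta)$, $\lambda_k\in[0,\bar\lambda)$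 with $\bar\gamma\ge0$, $\bar\theta,\bar\lambda\in[0,1/2)$; the sequence is infinite. Exogenous stepsize rule: $\mu\ge0$; $\{\alpha_k\}$, $\{\epsilon_k\}$ nonnegative, $\{\epsilon_k\}$ nonincreasing, $\sum_k\alpha_k=+\infty$, $\sum_k\alpha_k^2<+\infty$, $\epsilon_k\le\mu\alpha_k$ for all $k$; $t_k:=\alpha_k/\eta_k$ with $\eta_k:=\max\{1,\|s_k\|\}$. *)

theory Defs
  imports "HOL-Analysis.Analysis"
begin

definition eps_subdiff :: "('a::real_inner \<Rightarrow> real) \<Rightarrow> real \<Rightarrow> 'a \<Rightarrow> 'a set" where
  "eps_subdiff f eps x = {s. \<forall>y. f y \<ge> f x + inner s (y - x) - eps}"

definition rel_err_tol :: "real \<Rightarrow> real \<Rightarrow> real \<Rightarrow> ('a::real_normed_vector \<Rightarrow> 'a \<Rightarrow> 'a \<Rightarrow> real) \<Rightarrow> bool" where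
  "rel_err_tol gam th lam phi \<longleftrightarrow>
     (\<forall>u v w. 0 \<le> phi u v w \<and>
        phi u v w \<le> gam * (norm (v - u))\<^sup>2 + th * (norm (w - v))\<^sup>2 + lam * (norm (w - u))\<^sup>2)"

definition inexact_proj :: "'a::real_inner set \<Rightarrow> ('a \<Rightarrow> 'a \<Rightarrow> 'a \<Rightarrow> real) \<Rightarrow> 'a \<Rightarrow> 'a \<Rightarrow> 'a set" where
  "inexact_proj C phi u v = {w \<in> C. \<forall>z\<in>C. inner (v - w) (z - w) \<le> phi u v w}"

end

theory Submission
  imports Defs
begin

text \<open>
  By polarization, \<open>\<theta> \<le> 1/2\<close> lets the \<open>\<parallel>w - v\<parallel>\<^sup>2\<close> term of the error tolerance be absorbed.
  Testing the defining inequality of the inexact projection \<open>w\<close> of \<open>v\<close> against \<open>z = u\<close> then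
  bounds the step, \<open>(1 - 2\<lambda>) \<parallel>w - u\<parallel>\<^sup>2 \<le> (1 + 2\<gamma>) \<parallel>v - u\<parallel>\<^sup>2\<close>, and testing it against
  \<open>z = x\<close> shows that \<open>w\<close> is as close to \<open>x\<close> as \<open>v\<close> is, up to \<open>(\<nu> - 1) \<parallel>v - u\<parallel>\<^sup>2\<close>.
  For \<open>v = u - t s\<close> the expansion of \<open>\<parallel>v - x\<parallel>\<^sup>2\<close> and the \<open>\<epsilon>\<close>-subgradient inequality give
  the estimate, and the normalized stepsize \<open>t = \<alpha> / max 1 \<parallel>s\<parallel>\<close> bounds both \<open>t \<parallel>s\<parallel>\<close> and \<open>t\<close>
  by \<open>\<alpha>\<close>.
\<close>

lemma inexact_proj_inner_le:
  fixes C :: "'a::real_inner set"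
  assumes w: "w \<in> inexact_proj C phi u v"
    and tol: "rel_err_tol g th l phi" and th: "th \<le> 1/2"
    and z: "z \<in> C"
  shows "2 * inner (v - w) (z - w)
           \<le> 2 * g * (norm (v - u))\<^sup>2 + (norm (w - v))\<^sup>2 + 2 * l * (norm (w - u))\<^sup>2"
proof -
  have "inner (v - w) (z - w) \<le> phi u v w"
    using w z by (simp add: inexact_proj_def)
  also have "\<dots> \<le> g * (norm (v - u))\<^sup>2 + th * (norm (w - v))\<^sup>2 + l * (norm (w - u))\<^sup>2"
    using tol by (simp add: rel_err_tol_def)
  also have "th * (norm (w - v))\<^sup>2 \<le> (1/2) * (norm (w - v))\<^sup>2"
    using th by (intro mult_right_mono) auto
  finally show ?thesis by simp
qed

lemma inexact_proj_step_le:
  fixes C :: "'a::real_inner set"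
  assumes w: "w \<in> inexact_proj C phi u v" and u: "u \<in> C"
    and tol: "rel_err_tol g th l phi" and th: "th \<le> 1/2"
  shows "(1 - 2 * l) * (norm (w - u))\<^sup>2 \<le> (1 + 2 * g) * (norm (v - u))\<^sup>2"
proof -
  have "2 * inner (v - w) (u - w) = (norm (v - w))\<^sup>2 + (norm (u - w))\<^sup>2 - (norm (v - u))\<^sup>2"
    by (simp add: dot_norm_neg)
  with inexact_proj_inner_le[OF w tol th u] show ?thesis
    by (simp add: norm_minus_commute algebra_simps)
qed

lemma inexact_proj_dist_le:
  fixes C :: "'a::real_inner set"
  assumes w: "w \<in> inexact_proj C phi u v" and u: "u \<in> C" and x: "x \<in> C"
    and tol: "rel_err_tol g th l phi" and th: "th \<le> 1/2"
    and g: "0 \<le> g" and l: "0 \<le> l" "l < 1/2"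
  shows "(norm (w - x))\<^sup>2 \<le> (norm (v - x))\<^sup>2 + ((1 + 2 * g) / (1 - 2 * l) - 1) * (norm (v - u))\<^sup>2"
proof -
  have "2 * inner (v - w) (x - w) = (norm (v - w))\<^sup>2 + (norm (x - w))\<^sup>2 - (norm (v - x))\<^sup>2"
    by (simp add: dot_norm_neg)
  with inexact_proj_inner_le[OF w tol th x]
  have "(norm (w - x))\<^sup>2 \<le> (norm (v - x))\<^sup>2 + 2 * g * (norm (v - u))\<^sup>2 + 2 * l * (norm (w - u))\<^sup>2"
    by (simp add: norm_minus_commute)
  moreover have "(norm (w - u))\<^sup>2 \<le> (1 + 2 * g) / (1 - 2 * l) * (norm (v - u))\<^sup>2"
    using inexact_proj_step_le[OF w u tol th] l by (simp add: field_simps)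
  hence "2 * l * (norm (w - u))\<^sup>2 \<le> 2 * l * ((1 + 2 * g) / (1 - 2 * l) * (norm (v - u))\<^sup>2)"
    using l by (intro mult_left_mono) auto
  moreover have "2 * g * (norm (v - u))\<^sup>2 + 2 * l * ((1 + 2 * g) / (1 - 2 * l) * (norm (v - u))\<^sup>2)
      = ((1 + 2 * g) / (1 - 2 * l) - 1) * (norm (v - u))\<^sup>2"
    using l by (simp add: field_simps)
  ultimately show ?thesis by linarith
qed

lemma eps_subgradient_step_dist:
  fixes s :: "'a::real_inner"
  assumes s: "s \<in> eps_subdiff f eps u" and t: "0 \<le> t"
  shows "(norm (u - t *\<^sub>R s - x))\<^sup>2
           \<le> (norm (u - x))\<^sup>2 - 2 * t * (f u - f x) + 2 * t * eps + t\<^sup>2 * (norm s)\<^sup>2"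
proof -
  have "u - t *\<^sub>R s - x = u - x - t *\<^sub>R s"
    by (simp add: algebra_simps)
  moreover have "inner (u - x) (t *\<^sub>R s)
      = ((norm (u - x))\<^sup>2 + (norm (t *\<^sub>R s))\<^sup>2 - (norm (u - x - t *\<^sub>R s))\<^sup>2) / 2"
    by (rule dot_norm_neg)
  moreover have "inner s (x - u) = - inner (u - x) s"
    by (simp add: inner_commute inner_diff_right inner_diff_left)
  ultimately have "(norm (u - t *\<^sub>R s - x))\<^sup>2
      = (norm (u - x))\<^sup>2 + 2 * t * inner s (x - u) + t\<^sup>2 * (norm s)\<^sup>2"
    by (simp only: inner_scaleR_right norm_scaleR power_mult_distrib power2_abs)
      (simp add: algebra_simps)
  moreover have "t * inner s (x - u) \<le> t * (f x - f u + eps)"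
    using s t unfolding eps_subdiff_def by (intro mult_left_mono) (auto simp: algebra_simps)
  ultimately show ?thesis by (simp add: algebra_simps)
qed

lemma inexact_subgradient_step_dist_le:
  fixes C :: "'a::real_inner set"
  assumes w: "w \<in> inexact_proj C phi u (u - t *\<^sub>R s)" and u: "u \<in> C" and x: "x \<in> C"
    and s: "s \<in> eps_subdiff f eps u" and t: "0 \<le> t"
    and tol: "rel_err_tol g th l phi" and th: "th \<le> 1/2"
    and g: "0 \<le> g" and l: "0 \<le> l" "l < 1/2"
  shows "(norm (w - x))\<^sup>2 \<le> (norm (u - x))\<^sup>2 - 2 * t * (f u - f x) + 2 * t * eps
           + (1 + 2 * g) / (1 - 2 * l) * (t * norm s)\<^sup>2"
proof -
  have "norm (u - t *\<^sub>R s - u) = t * norm s"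
    using t by simp
  with inexact_proj_dist_le[OF w u x tol th g l] eps_subgradient_step_dist[OF s t, of x]
  show ?thesis by (simp add: power_mult_distrib algebra_simps)
qed

lemma normalized_stepsize_bounds:
  fixes alpha :: real and s :: "'a::real_normed_vector"
  assumes "0 \<le> alpha"
  shows "0 \<le> alpha / max 1 (norm s)" "alpha / max 1 (norm s) \<le> alpha"
    "alpha / max 1 (norm s) * norm s \<le> alpha"
proof -
  have "1 \<le> max 1 (norm s)" "norm s \<le> max 1 (norm s)"
    by simp_all
  with assms show "0 \<le> alpha / max 1 (norm s)" "alpha / max 1 (norm s) \<le> alpha"
    "alpha / max 1 (norm s) * norm s \<le> alpha"
    by (simp_all add: divide_le_eq mult_left_mono mult_le_cancel_left1)
qed

lemma error_ratio_mono:
  fixes g l G L :: real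
  assumes "0 \<le> g" "g \<le> G" "l \<le> L" "L < 1/2"
  shows "(1 + 2 * g) / (1 - 2 * l) \<le> (1 + 2 * G) / (1 - 2 * L)"
  using assms by (intro frac_le) auto

theorem mainTheorem3:
  fixes f :: "'a::euclidean_space \<Rightarrow> real"
    and C :: "'a set"
    and xs s :: "nat \<Rightarrow> 'a"
    and eps alpha t gam th lam :: "nat \<Rightarrow> real"
    and phi :: "nat \<Rightarrow> 'a \<Rightarrow> 'a \<Rightarrow> 'a \<Rightarrow> real"
    and gbar thbar lbar mu :: real
  assumes f_convex: "convex_on UNIV f"
    and C_closed: "closed C" and C_convex: "convex C" and C_nonempty: "C \<noteq> {}"
    and x0: "xs 0 \<in> C"
    and not_opt: "\<And>k. 0 \<notin> eps_subdiff f 0 (xs k)"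
    and s_nz: "\<And>k. s k \<noteq> 0"
    and s_sub: "\<And>k. s k \<in> eps_subdiff f (eps k) (xs k)"
    and t_def: "\<And>k. t k = alpha k / max 1 (norm (s k))"
    and phi_tol: "\<And>k. rel_err_tol (gam k) (th k) (lam k) (phi k)"
    and step: "\<And>k. xs (Suc k) \<in> inexact_proj C (phi k) (xs k) (xs k - t k *\<^sub>R s k)"
    and gam_rng: "\<And>k. 0 \<le> gam k \<and> gam k < gbar"
    and th_rng: "\<And>k. 0 \<le> th k \<and> th k < thbar"
    and lam_rng: "\<And>k. 0 \<le> lam k \<and> lam k < lbar"
    and gbar_nn: "0 \<le> gbar"
    and thbar_rng: "0 \<le> thbar \<and> thbar < 1/2"
    and lbar_rng: "0 \<le> lbar \<and> lbar < 1/2"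
    and mu_nn: "0 \<le> mu"
    and alpha_nn: "\<And>k. 0 \<le> alpha k"
    and eps_nn: "\<And>k. 0 \<le> eps k"
    and eps_noninc: "decseq eps"
    and alpha_div: "filterlim (\<lambda>n. \<Sum>k<n. alpha k) at_top sequentially"
    and alpha_sq: "summable (\<lambda>k. (alpha k)\<^sup>2)"
    and eps_le: "\<And>k. eps k \<le> mu * alpha k"
  shows "\<forall>x\<in>C. \<forall>k.
           (norm (xs (Suc k) - x))\<^sup>2 \<le> (norm (xs k - x))\<^sup>2
             + ((1 + 2 * gbar) / (1 - 2 * lbar) + 2 * mu) * (alpha k)\<^sup>2
             - 2 * (alpha k / max 1 (norm (s k))) * (f (xs k) - f x)"
proof (intro ballI allI)
  fix x k assume x: "x \<in> C"
  define \<nu> where "\<nu> = (1 + 2 * gbar) / (1 - 2 * lbar)"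
  have xs_in_C: "xs k \<in> C"
    using x0 step by (cases k) (auto simp: inexact_proj_def)
  have t: "0 \<le> t k" "t k \<le> alpha k" "t k * norm (s k) \<le> alpha k"
    using normalized_stepsize_bounds[OF alpha_nn] t_def by simp_all
  have "(norm (xs (Suc k) - x))\<^sup>2 \<le> (norm (xs k - x))\<^sup>2 - 2 * t k * (f (xs k) - f x)
      + 2 * t k * eps k + (1 + 2 * gam k) / (1 - 2 * lam k) * (t k * norm (s k))\<^sup>2"
    by (rule inexact_subgradient_step_dist_le[OF step[of k] xs_in_C x s_sub[of k] t(1) phi_tol[of k]])
      (use th_rng[of k] thbar_rng gam_rng[of k] lam_rng[of k] lbar_rng in auto)
  also have "(1 + 2 * gam k) / (1 - 2 * lam k) * (t k * norm (s k))\<^sup>2 \<le> \<nu> * (alpha k)\<^sup>2"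
    unfolding \<nu>_def using gam_rng lam_rng gbar_nn lbar_rng t
    by (intro mult_mono error_ratio_mono power_mono) (auto simp: less_imp_le)
  finally have "(norm (xs (Suc k) - x))\<^sup>2
      \<le> (norm (xs k - x))\<^sup>2 - 2 * t k * (f (xs k) - f x) + 2 * t k * eps k + \<nu> * (alpha k)\<^sup>2"
    by simp
  moreover have "t k * eps k \<le> mu * (alpha k)\<^sup>2"
    using t eps_nn[of k] eps_le[of k] alpha_nn[of k] mult_mono[of "t k" "alpha k" "eps k" "mu * alpha k"]
    by (simp add: power2_eq_square mult.left_commute)
  ultimately show "(norm (xs (Suc k) - x))\<^sup>2 \<le> (norm (xs k - x))\<^sup>2
      + ((1 + 2 * gbar) / (1 - 2 * lbar) + 2 * mu) * (alpha k)\<^sup>2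
      - 2 * (alpha k / max 1 (norm (s k))) * (f (xs k) - f x)"
    unfolding \<nu>_def t_def[symmetric] by (simp add: ring_distribs)
qed

end
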